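(* Let $A$ be an associative unital $k$-algebra over a commutative ring $k$. Then $A$ is a left Ore domain if and only if $A$ is a monoform left $A$-module. In this case $A$ is a monoform left $B$-module for every subalgebra $B$ with $L(A)\subseteq B\subseteq\mathrm{End}_k(A)$.
   Context: $L(A)=\{L_a: a\in A\}$ where $L_a(x)=ax$; $A$ is a left $B$-module via $\varphi\cdot a=\varphi(a)$. A left Ore domain is a domain $R$ such that $Ra\cap Rb\neq 0$ for all nonzero $a,b\in R$ (equivalently, a domain of left uniform dimension $1$). A module $M$ is monoform if every nonzero homomorphism $f:N\to M$ from a submodule $N\subseteq M$ is injective. *)

theory Defs
  imports Main "HOL.Modules"
begin

text \<open>A is modelled as the whole ring type 'a; the k-algebra structure is a
scalar action smult of a commutative ring type 'k making 'a a k-module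
(HOL's module locale) compatible with multiplication.\<close>

definition k_algebra :: "('k::comm_ring_1 \<Rightarrow> 'a::ring_1 \<Rightarrow> 'a) \<Rightarrow> bool" where
  "k_algebra smult \<longleftrightarrow> module smult \<and>
     (\<forall>c a b. smult c (a * b) = smult c a * b \<and> smult c (a * b) = a * smult c b)"

definition L :: "'a::ring_1 \<Rightarrow> 'a \<Rightarrow> 'a" where
  "L a = (\<lambda>x. a * x)"

definition left_ore_domain :: "'a::ring_1 itself \<Rightarrow> bool" where
  "left_ore_domain (_::'a itself) \<longleftrightarrow>
     (1::'a) \<noteq> 0 \<and> (\<forall>a b::'a. a * b = 0 \<longrightarrow> a = 0 \<or> b = 0) \<and>
     (\<forall>a b::'a. a \<noteq> 0 \<longrightarrow> b \<noteq> 0 \<longrightarrow> (\<exists>r s. r * a = s * b \<and> r * a \<noteq> 0))"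

text \<open>Module structure on 'a given by a set B of operators acting by evaluation
(phi . x = phi x). For B = L(A) this is the left regular A-module.\<close>
definition op_submodule :: "('a::ab_group_add \<Rightarrow> 'a) set \<Rightarrow> 'a set \<Rightarrow> bool" where
  "op_submodule B N \<longleftrightarrow> 0 \<in> N \<and> (\<forall>x\<in>N. \<forall>y\<in>N. x + y \<in> N) \<and> (\<forall>x\<in>N. - x \<in> N)
     \<and> (\<forall>\<phi>\<in>B. \<forall>x\<in>N. \<phi> x \<in> N)"

definition op_hom :: "('a::ab_group_add \<Rightarrow> 'a) set \<Rightarrow> 'a set \<Rightarrow> ('a \<Rightarrow> 'a) \<Rightarrow> bool" where
  "op_hom B N f \<longleftrightarrow> (\<forall>x\<in>N. \<forall>y\<in>N. f (x + y) = f x + f y) \<and>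
     (\<forall>\<phi>\<in>B. \<forall>x\<in>N. f (\<phi> x) = \<phi> (f x))"

definition monoform :: "('a::ab_group_add \<Rightarrow> 'a) set \<Rightarrow> bool" where
  "monoform B \<longleftrightarrow> (\<forall>N f. op_submodule B N \<and> op_hom B N f \<and> (\<exists>x\<in>N. f x \<noteq> 0)
       \<longrightarrow> inj_on f N)"

definition k_linear :: "('k::comm_ring_1 \<Rightarrow> 'a::ab_group_add \<Rightarrow> 'a) \<Rightarrow> ('a \<Rightarrow> 'a) \<Rightarrow> bool" where
  "k_linear smult f \<longleftrightarrow> (\<forall>x y. f (x + y) = f x + f y) \<and> (\<forall>c x. f (smult c x) = smult c (f x))"

definition End_subalgebra :: "('k::comm_ring_1 \<Rightarrow> 'a::ab_group_add \<Rightarrow> 'a) \<Rightarrow> ('a \<Rightarrow> 'a) set \<Rightarrow> bool" where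
  "End_subalgebra smult B \<longleftrightarrow> (\<forall>f\<in>B. k_linear smult f) \<and> id \<in> B \<and> (\<lambda>x. 0) \<in> B \<and>
     (\<forall>f\<in>B. \<forall>g\<in>B. (\<lambda>x. f x + g x) \<in> B \<and> f \<circ> g \<in> B) \<and>
     (\<forall>c. \<forall>f\<in>B. (\<lambda>x. smult c (f x)) \<in> B)"

end

theory Submission
  imports Defs
begin

text \<open>
  Proof idea.  A homomorphism of modules is injective iff its kernel is trivial,
  so monoformness of a module says: a homomorphism from a submodule that kills a
  nonzero element kills everything.

  Ore \<Longrightarrow> monoform: for any operator set B containing all left multiplications,
  if f kills z \<noteq> 0 but not w, the Ore condition gives r z = s w \<noteq> 0, whence
  0 = f (r z) = s f(w); as A is a domain s = 0, contradicting s w \<noteq> 0.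

  Monoform \<Longrightarrow> Ore: right multiplication by b \<noteq> 0 is an endomorphism of the
  regular module not killing 1, hence injective, so A is a domain.  If
  Aa \<inter> Ab = 0 then the projection of Aa \<oplus> Ab onto Aa is a homomorphism that
  fixes a \<noteq> 0 and kills b \<noteq> 0, contradicting monoformness.
\<close>

lemma op_hom_zero:
  assumes "op_hom B N f" and "0 \<in> N"
  shows "f 0 = 0"
proof -
  have "f (0 + 0) = f 0 + f 0" using assms unfolding op_hom_def by blast
  thus ?thesis by simp
qed

lemma op_hom_inj_on_iff:
  assumes N: "op_submodule B N" and f: "op_hom B N f"
  shows "inj_on f N \<longleftrightarrow> (\<forall>z\<in>N. f z = 0 \<longrightarrow> z = 0)"
proof
  assume "inj_on f N"
  moreover have "0 \<in> N" "f 0 = 0" using N f op_hom_zero unfolding op_submodule_def by blast+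
  ultimately show "\<forall>z\<in>N. f z = 0 \<longrightarrow> z = 0" by (metis inj_onD)
next
  assume ker: "\<forall>z\<in>N. f z = 0 \<longrightarrow> z = 0"
  show "inj_on f N"
  proof (rule inj_onI)
    fix x y assume x: "x \<in> N" and y: "y \<in> N" and fxy: "f x = f y"
    have diff: "x - y \<in> N"
      using N x y unfolding op_submodule_def by (metis diff_conv_add_uminus)
    have "f (x - y + y) = f (x - y) + f y" using f diff y unfolding op_hom_def by blast
    hence "f (x - y) = 0" using fxy by simp
    thus "x = y" using ker diff by auto
  qed
qed

lemma op_submodule_mult:
  assumes "range L \<subseteq> B" and "op_submodule B N" and "x \<in> N"
  shows "c * x \<in> N"
proof -
  have "L c \<in> B" using assms(1) by blast
  thus ?thesis using assms(2,3) unfolding op_submodule_def L_def by blast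
qed

lemma op_hom_mult:
  assumes "range L \<subseteq> B" and "op_hom B N f" and "x \<in> N"
  shows "f (c * x) = c * f x"
proof -
  have "L c \<in> B" using assms(1) by blast
  thus ?thesis using assms(2,3) unfolding op_hom_def L_def by blast
qed

lemma ore_monoform:
  assumes ore: "left_ore_domain TYPE('a::ring_1)"
    and BL: "range (L :: 'a \<Rightarrow> 'a \<Rightarrow> 'a) \<subseteq> B"
  shows "monoform B"
  unfolding monoform_def
proof (intro allI impI)
  fix N and f :: "'a \<Rightarrow> 'a"
  assume "op_submodule B N \<and> op_hom B N f \<and> (\<exists>x\<in>N. f x \<noteq> 0)"
  then have N: "op_submodule B N" and f: "op_hom B N f"
    and "\<exists>w\<in>N. f w \<noteq> 0" by blast+
  then obtain w where w: "w \<in> N" "f w \<noteq> 0" by blast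
  have domain: "\<And>a b::'a. a * b = 0 \<Longrightarrow> a = 0 \<or> b = 0"
    and ore_cond: "\<And>a b::'a. a \<noteq> 0 \<Longrightarrow> b \<noteq> 0 \<Longrightarrow> \<exists>r s. r * a = s * b \<and> r * a \<noteq> 0"
    using ore unfolding left_ore_domain_def by blast+
  have "z = 0" if z: "z \<in> N" "f z = 0" for z
  proof (rule ccontr)
    assume "z \<noteq> 0"
    moreover have "w \<noteq> 0" using w op_hom_mult[OF BL f w(1), of 0] by auto
    ultimately obtain r s where rs: "r * z = s * w" "r * z \<noteq> 0"
      using ore_cond by blast
    have "s * f w = f (r * z)" using op_hom_mult[OF BL f] z(1) w(1) rs(1) by simp
    also have "\<dots> = 0" using op_hom_mult[OF BL f z(1)] z(2) by simp
    finally have "s = 0" using domain w(2) by blast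
    thus False using rs by simp
  qed
  thus "inj_on f N" using op_hom_inj_on_iff[OF N f] by blast
qed

lemma right_mult_op_hom: "op_hom (range L) UNIV (\<lambda>x. x * (b::'a::ring_1))"
  unfolding op_hom_def L_def by (auto simp: algebra_simps)

lemma op_submodule_UNIV: "op_submodule B UNIV"
  unfolding op_submodule_def by simp

definition left_ideal2 :: "'a::ring_1 \<Rightarrow> 'a \<Rightarrow> 'a set" where
  "left_ideal2 a b = {r * a + s * b | r s. True}"

lemma op_submodule_left_ideal2: "op_submodule (range L) (left_ideal2 a b)"
  unfolding op_submodule_def left_ideal2_def L_def
proof (intro conjI ballI)
  show "0 \<in> {r * a + s * b |r s. True}" by (intro CollectI exI[of _ 0]) simp
next
  fix x y assume "x \<in> {r * a + s * b |r s. True}" "y \<in> {r * a + s * b |r s. True}"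
  then obtain r s r' s' where "x = r * a + s * b" "y = r' * a + s' * b" by blast
  thus "x + y \<in> {r * a + s * b |r s. True}"
    by (intro CollectI exI[of _ "r + r'"] exI[of _ "s + s'"]) (simp add: algebra_simps)
next
  fix x assume "x \<in> {r * a + s * b |r s. True}"
  then obtain r s where "x = r * a + s * b" by blast
  thus "- x \<in> {r * a + s * b |r s. True}"
    by (intro CollectI exI[of _ "- r"] exI[of _ "- s"]) (simp add: algebra_simps)
next
  fix \<phi> :: "'a \<Rightarrow> 'a" and x
  assume "\<phi> \<in> range (\<lambda>a x. a * x)" "x \<in> {r * a + s * b |r s. True}"
  then obtain c r s where "\<phi> = (\<lambda>x. c * x)" "x = r * a + s * b" by blast
  thus "\<phi> x \<in> {r * a + s * b |r s. True}"
    by (intro CollectI exI[of _ "c * r"] exI[of _ "c * s"]) (simp add: algebra_simps)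
qed

text \<open>If Aa \<inter> Ab = 0, the sum Aa + Ab is direct and the projection onto Aa
  (well defined by directness) is a homomorphism fixing a and killing b.\<close>
lemma direct_sum_projection:
  fixes a b :: "'a::ring_1"
  assumes direct: "\<And>r s. r * a = s * b \<Longrightarrow> r * a = 0"
  obtains p where "op_hom (range L) (left_ideal2 a b) p" and "p a = a" and "p b = 0"
proof -
  define p where "p x = (SOME y. \<exists>r s. x = r * a + s * b \<and> y = r * a)" for x
  have unique: "r * a = r' * a" if "r * a + s * b = r' * a + s' * b" for r s r' s'
  proof -
    have "(r - r') * a = (s' - s) * b" using that by (simp add: algebra_simps)
    hence "(r - r') * a = 0" using direct by blast
    thus ?thesis by (simp add: algebra_simps)
  qed
  have p_eq: "p (r * a + s * b) = r * a" for r s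
  proof -
    have "\<exists>r' s'. r * a + s * b = r' * a + s' * b \<and> p (r * a + s * b) = r' * a"
      unfolding p_def by (rule someI_ex) blast
    thus ?thesis using unique by metis
  qed
  have "op_hom (range L) (left_ideal2 a b) p"
    unfolding op_hom_def left_ideal2_def L_def
  proof (intro conjI ballI)
    fix x y assume "x \<in> {r * a + s * b |r s. True}" "y \<in> {r * a + s * b |r s. True}"
    then obtain r s r' s' where x: "x = r * a + s * b" and y: "y = r' * a + s' * b" by blast
    have "x + y = (r + r') * a + (s + s') * b" using x y by (simp add: algebra_simps)
    hence "p (x + y) = (r + r') * a" using p_eq by simp
    thus "p (x + y) = p x + p y" using x y p_eq by (simp add: algebra_simps)
  next
    fix \<phi> :: "'a \<Rightarrow> 'a" and x
    assume "\<phi> \<in> range (\<lambda>a x. a * x)" "x \<in> {r * a + s * b |r s. True}"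
    then obtain c r s where \<phi>: "\<phi> = (\<lambda>x. c * x)" and x: "x = r * a + s * b" by blast
    have "c * x = (c * r) * a + (c * s) * b" using x by (simp add: algebra_simps)
    hence "p (c * x) = (c * r) * a" using p_eq by simp
    thus "p (\<phi> x) = \<phi> (p x)" using \<phi> x p_eq by (simp add: algebra_simps)
  qed
  moreover have "p a = a" using p_eq[of 1 0] by simp
  moreover have "p b = 0" using p_eq[of 0 1] by simp
  ultimately show thesis using that by blast
qed

lemma monoform_ore:
  assumes M: "monoform (range (L :: 'a::ring_1 \<Rightarrow> 'a \<Rightarrow> 'a))"
  shows "left_ore_domain TYPE('a)"
proof -
  have inj: "inj_on f N"
    if "op_submodule (range L) N" "op_hom (range L) N f" "x \<in> N" "f x \<noteq> 0"
    for N f and x :: 'a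
    using M that unfolding monoform_def by blast
  have domain: "a = 0 \<or> b = 0" if ab: "a * b = 0" for a b :: 'a
  proof (rule ccontr)
    assume nz: "\<not> (a = 0 \<or> b = 0)"
    have "inj_on (\<lambda>x. x * b) UNIV"
      using inj[OF op_submodule_UNIV right_mult_op_hom, of 1] nz by simp
    hence "a = 0" using ab by (metis UNIV_I inj_onD mult_zero_left)
    thus False using nz by simp
  qed
  have ore_cond: "\<exists>r s. r * a = s * b \<and> r * a \<noteq> 0" if "a \<noteq> 0" "b \<noteq> 0" for a b :: 'a
  proof (rule ccontr)
    assume "\<not> (\<exists>r s. r * a = s * b \<and> r * a \<noteq> 0)"
    then obtain p where p: "op_hom (range L) (left_ideal2 a b) p" "p a = a" "p b = 0"
      using direct_sum_projection by blast
    have mem: "a \<in> left_ideal2 a b" "b \<in> left_ideal2 a b"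
      unfolding left_ideal2_def
      by (intro CollectI exI[of _ 1] exI[of _ 0], simp, intro CollectI exI[of _ 0] exI[of _ 1], simp)
    have "inj_on p (left_ideal2 a b)"
      using inj[OF op_submodule_left_ideal2 p(1) mem(1)] p(2) that(1) by simp
    hence "b = 0"
      using op_hom_inj_on_iff[OF op_submodule_left_ideal2 p(1)] mem(2) p(3) by blast
    thus False using that(2) by simp
  qed
  show ?thesis unfolding left_ore_domain_def using domain ore_cond by simp
qed

theorem lemma2p3:
  fixes smult :: "'k::comm_ring_1 \<Rightarrow> 'a::ring_1 \<Rightarrow> 'a"
  assumes "k_algebra smult"
  shows "(left_ore_domain TYPE('a) \<longleftrightarrow> monoform (range (L :: 'a \<Rightarrow> 'a \<Rightarrow> 'a))) \<and>
         (left_ore_domain TYPE('a) \<longrightarrow>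
            (\<forall>B. End_subalgebra smult B \<and> range L \<subseteq> B \<longrightarrow> monoform B))"
  using ore_monoform[of "range L"] ore_monoform monoform_ore by blast

end
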